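(* Let $k\ge2$, $0\le\alpha<1$, and let $G$ be a connected $k$-uniform hypergraph with $\alpha$-Perron vector $x$. Let $e,f\in E(G)$ with $e\cap f=\emptyset$, and let $U\subset e$, $V\subset f$ with $1\le|U|=|V|\le k-1$. Let $e'=U\cup(f\setminus V)$ and $f'=V\cup(e\setminus U)$, and suppose $e',f'\notin E(G)$. Let $G'$ be obtained from $G$ by deleting $e,f$ and adding $e',f'$. Writing $x_S=\prod_{w\in S}x_w$ for $S\subseteq V(G)$, if $x_U\ge x_V$ and $x_{e\setminus U}\le x_{f\setminus V}$, with at least one of these two inequalities strict, then $\rho_\alpha(G)<\rho_\alpha(G')$.
   Context: Hypergraphs are finite with edges being sets; $k$-uniform means every edge has $k$ vertices; degrees count edges containing a vertex. $\mathcal A(G)$ is the order-$k$ tensor with $(i_1,\dots,i_k)$-entry $\frac1{(k-1)!}$ if $\{i_1,\dots,i_k\}\in E(G)$, $0$ otherwise; $\mathcal D(G)$ is the diagonal tensor of degrees; $\mathcal A_\alpha(G)=\alpha\mathcal D(G)+(1-\alpha)\mathcal A(G)$. For an order-$k$ tensor $\mathcal T$, $(\mathcal Tx)_i=\sum_{i_2,\dots,i_k}\mathcal T_{ii_2\dots i_k}x_{i_2}\cdots x_{i_k}$; $\lambda$ is an eigenvalue if $\mathcal Tx=\lambda x^{[k-1]}$ for some $x\ne0$. $\rho_\alpha(G)$ is the largest modulus of an eigenvalue of $\mathcal A_\alpha(G)$. Connected: any two vertices joined by a path (alternating sequence of distinct vertices and distinct edges, consecutive vertices lying in the edge between them). For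 connected $G$, the $\alpha$-Perron vector is the unique entrywise positive $x$ with $\sum_i x_i^k=1$ and $\mathcal A_\alpha(G)x=\rho_\alpha(G)x^{[k-1]}$. *)

theory Defs
  imports Complex_Main
begin

text \<open>A hypergraph is given by a vertex set VV and an edge set E (a set of vertex sets).
  Order-k tensors on VV are functions from index lists (of length k, entries in VV) to reals.\<close>

definition k_uniform :: "'a set \<Rightarrow> 'a set set \<Rightarrow> nat \<Rightarrow> bool" where
  "k_uniform VV E k \<longleftrightarrow> finite VV \<and> (\<forall>e\<in>E. e \<subseteq> VV \<and> card e = k)"

definition degree :: "'a set set \<Rightarrow> 'a \<Rightarrow> nat" where
  "degree E i = card {e\<in>E. i \<in> e}"

definition is_path :: "'a set set \<Rightarrow> 'a list \<Rightarrow> 'a set list \<Rightarrow> bool" where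
  "is_path E vs es \<longleftrightarrow> vs \<noteq> [] \<and> length es + 1 = length vs \<and> distinct vs \<and> distinct es
     \<and> set es \<subseteq> E \<and> (\<forall>j<length es. vs ! j \<in> es ! j \<and> vs ! (Suc j) \<in> es ! j)"

definition hg_connected :: "'a set \<Rightarrow> 'a set set \<Rightarrow> bool" where
  "hg_connected VV E \<longleftrightarrow> (\<forall>u\<in>VV. \<forall>v\<in>VV. \<exists>vs es. is_path E vs es \<and> hd vs = u \<and> last vs = v)"

definition index_tuples :: "'a set \<Rightarrow> nat \<Rightarrow> 'a list set" where
  "index_tuples VV m = {is. set is \<subseteq> VV \<and> length is = m}"

definition tensor_apply :: "'a set \<Rightarrow> nat \<Rightarrow> ('a list \<Rightarrow> real) \<Rightarrow> ('a \<Rightarrow> complex) \<Rightarrow> 'a \<Rightarrow> complex" where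
  "tensor_apply VV k T x i = (\<Sum>is\<in>index_tuples VV (k - 1). complex_of_real (T (i # is)) * prod_list (map x is))"

definition tensor_eigenvalue :: "'a set \<Rightarrow> nat \<Rightarrow> ('a list \<Rightarrow> real) \<Rightarrow> complex \<Rightarrow> bool" where
  "tensor_eigenvalue VV k T lam \<longleftrightarrow>
     (\<exists>x. (\<exists>i\<in>VV. x i \<noteq> 0) \<and> (\<forall>i\<in>VV. tensor_apply VV k T x i = lam * x i ^ (k - 1)))"

definition tensor_spectral_radius :: "'a set \<Rightarrow> nat \<Rightarrow> ('a list \<Rightarrow> real) \<Rightarrow> real" where
  "tensor_spectral_radius VV k T = Sup {cmod lam | lam. tensor_eigenvalue VV k T lam}"

definition adj_tensor :: "'a set set \<Rightarrow> nat \<Rightarrow> 'a list \<Rightarrow> real" where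
  "adj_tensor E k is = (if set is \<in> E then 1 / fact (k - 1) else 0)"

definition deg_tensor :: "'a set set \<Rightarrow> 'a list \<Rightarrow> real" where
  "deg_tensor E is = (case is of [] \<Rightarrow> 0
     | i # _ \<Rightarrow> (if \<forall>j\<in>set is. j = i then real (degree E i) else 0))"

definition A_alpha :: "'a set set \<Rightarrow> nat \<Rightarrow> real \<Rightarrow> 'a list \<Rightarrow> real" where
  "A_alpha E k \<alpha> is = \<alpha> * deg_tensor E is + (1 - \<alpha>) * adj_tensor E k is"

definition rho_alpha :: "'a set \<Rightarrow> 'a set set \<Rightarrow> nat \<Rightarrow> real \<Rightarrow> real" where
  "rho_alpha VV E k \<alpha> = tensor_spectral_radius VV k (A_alpha E k \<alpha>)"

text \<open>alpha-Perron vector: entrywise positive, sum of k-th powers 1, eigenvector for rho_alpha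
  (it is unique for connected G; the predicate just states its defining properties).\<close>
definition alpha_perron_vector :: "'a set \<Rightarrow> 'a set set \<Rightarrow> nat \<Rightarrow> real \<Rightarrow> ('a \<Rightarrow> real) \<Rightarrow> bool" where
  "alpha_perron_vector VV E k \<alpha> x \<longleftrightarrow>
     (\<forall>i\<in>VV. x i > 0) \<and> (\<Sum>i\<in>VV. x i ^ k) = 1 \<and>
     (\<forall>i\<in>VV. tensor_apply VV k (A_alpha E k \<alpha>) (\<lambda>j. complex_of_real (x j)) i
               = complex_of_real (rho_alpha VV E k \<alpha>) * complex_of_real (x i) ^ (k - 1))"

end

theory Submission
  imports Defs "HOL-Analysis.Analysis" "HOL-Combinatorics.Multiset_Permutations"
begin

text \<open>
  On nonnegative vectors \<open>y\<close> with \<open>\<Sum>_i y_i^k = 1\<close> consider the form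
  \<open>\<alpha> \<Sum>_i d_i y_i^k + (1 - \<alpha>) k \<Sum>_e \<Prod>_{v\<in>e} y_v\<close>, the pairing of \<open>y\<close> with \<open>\<A>_\<alpha> y^{k-1}\<close>.
  A maximizer satisfies the Lagrange conditions, so it is an eigenvector and the maximum is
  at most \<open>\<rho>_\<alpha>\<close>; at the Perron vector \<open>x\<close> of \<open>G\<close> the form equals \<open>\<rho>_\<alpha>(G)\<close>.
  The switch keeps all degrees and changes the form at \<open>x\<close> by
  \<open>(1 - \<alpha>) k (x_U - x_W) (x_{f-W} - x_{e-U}) \<ge> 0\<close> (\<open>W\<close> is the \<open>V\<close> of the paper),
  so \<open>\<rho>_\<alpha>(G') \<ge> \<rho>_\<alpha>(G)\<close>. Equality would make \<open>x\<close> a maximizer for \<open>G'\<close> too, hence an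
  eigenvector of \<open>\<A>_\<alpha>(G')\<close> for \<open>\<rho>_\<alpha>(G)\<close>; comparing the eigen-equations of \<open>G\<close> and \<open>G'\<close>
  at a vertex of \<open>U\<close> and at a vertex of \<open>f - W\<close> forces \<open>x_U = x_W\<close> and
  \<open>x_{e-U} = x_{f-W}\<close>.
\<close>

definition A_alpha_mult :: "'a set set \<Rightarrow> nat \<Rightarrow> real \<Rightarrow> ('a \<Rightarrow> real) \<Rightarrow> 'a \<Rightarrow> real" where
  "A_alpha_mult E k \<alpha> y i = \<alpha> * real (Defs.degree E i) * y i ^ (k - 1)
      + (1 - \<alpha>) * (\<Sum>e\<in>{e\<in>E. i \<in> e}. \<Prod>v\<in>e - {i}. y v)"

definition alpha_form :: "'a set \<Rightarrow> 'a set set \<Rightarrow> nat \<Rightarrow> real \<Rightarrow> ('a \<Rightarrow> real) \<Rightarrow> real" where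
  "alpha_form V E k \<alpha> y = \<alpha> * (\<Sum>i\<in>V. real (Defs.degree E i) * y i ^ k)
      + (1 - \<alpha>) * real k * (\<Sum>e\<in>E. \<Prod>v\<in>e. y v)"

text \<open>Vanishing outside \<open>V\<close> makes this set compact in the product topology.\<close>
definition nonneg_unit_sphere :: "'a set \<Rightarrow> nat \<Rightarrow> ('a \<Rightarrow> real) set" where
  "nonneg_unit_sphere V k =
     {y. (\<forall>i\<in>V. 0 \<le> y i) \<and> (\<forall>i. i \<notin> V \<longrightarrow> y i = 0) \<and> (\<Sum>i\<in>V. y i ^ k) = 1}"

section \<open>Evaluating \<open>\<A>_\<alpha>\<close> on real vectors\<close>

lemma k_uniform_finite_edges: "k_uniform V E k \<Longrightarrow> finite E"
  unfolding k_uniform_def by (meson Pow_iff finite_Pow_iff rev_finite_subset subsetI)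

lemma k_uniform_finite_edge: "k_uniform V E k \<Longrightarrow> e \<in> E \<Longrightarrow> finite e"
  unfolding k_uniform_def by (auto intro: finite_subset)

lemma finite_index_tuples: "finite V \<Longrightarrow> finite (index_tuples V m)"
  unfolding index_tuples_def by (rule finite_lists_length_eq)

lemma sum_deg_tensor_index_tuples:
  assumes "finite V" "i \<in> V"
  shows "(\<Sum>is\<in>index_tuples V m. deg_tensor E (i # is) * prod_list (map y is))
           = real (Defs.degree E i) * y i ^ m"
proof -
  have diagonal: "{is \<in> index_tuples V m. \<forall>j\<in>set is. j = i} = {replicate m i}"
    using assms(2) by (auto simp: index_tuples_def intro: replicate_eqI)
  have "(\<Sum>is\<in>index_tuples V m. deg_tensor E (i # is) * prod_list (map y is))
      = (\<Sum>is\<in>index_tuples V m. if \<forall>j\<in>set is. j = i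
                                  then real (Defs.degree E i) * prod_list (map y is) else 0)"
    by (rule sum.cong) (auto simp: deg_tensor_def)
  also have "\<dots> = real (Defs.degree E i) * y i ^ m"
    by (simp add: sum.inter_filter[symmetric] finite_index_tuples assms(1) diagonal)
  finally show ?thesis .
qed

lemma index_tuples_Cons_eq_permutations:
  assumes "k_uniform V E k" "e \<in> E" "i \<in> e" "k \<ge> 1"
  shows "{is \<in> index_tuples V (k - 1). set (i # is) = e} = permutations_of_set (e - {i})"
proof (intro set_eqI iffI)
  have eV: "e \<subseteq> V" and ce: "card e = k" and fe: "finite e"
    using assms k_uniform_finite_edge unfolding k_uniform_def by auto
  fix xs
  { assume "xs \<in> {is \<in> index_tuples V (k - 1). set (i # is) = e}"
    then have "length xs = k - 1" and s: "set (i # xs) = e" by (auto simp: index_tuples_def)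
    then have "distinct (i # xs)" using ce assms(4) by (intro card_distinct) simp
    then show "xs \<in> permutations_of_set (e - {i})" using s by (auto simp: permutations_of_set_def) }
  { assume "xs \<in> permutations_of_set (e - {i})"
    then have "distinct xs" and s: "set xs = e - {i}" by (auto simp: permutations_of_set_def)
    then have "length xs = k - 1" using ce assms(3) fe by (metis card_Diff_singleton distinct_card)
    then show "xs \<in> {is \<in> index_tuples V (k - 1). set (i # is) = e}"
      using s eV assms(3) by (auto simp: index_tuples_def) }
qed

lemma sum_adj_tensor_index_tuples:
  assumes "k_uniform V E k" "k \<ge> 1"
  shows "(\<Sum>is\<in>index_tuples V (k - 1). adj_tensor E k (i # is) * prod_list (map y is))
         = (\<Sum>e\<in>{e\<in>E. i \<in> e}. \<Prod>v\<in>e - {i}. y v)"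
proof -
  let ?Ei = "{e\<in>E. i \<in> e}" and ?c = "1 / fact (k - 1) :: real"
  have fin: "finite V" "finite ?Ei"
    using assms(1) k_uniform_finite_edges[OF assms(1)] by (auto simp: k_uniform_def)
  have "(\<Sum>is\<in>index_tuples V (k - 1). adj_tensor E k (i # is) * prod_list (map y is))
      = (\<Sum>is\<in>index_tuples V (k - 1). \<Sum>e\<in>?Ei. if set (i # is) = e then ?c * prod_list (map y is) else 0)"
    by (rule sum.cong) (simp_all add: adj_tensor_def sum.delta fin)
  also have "\<dots> = (\<Sum>e\<in>?Ei. \<Sum>is\<in>index_tuples V (k - 1). if set (i # is) = e then ?c * prod_list (map y is) else 0)"
    by (rule sum.swap)
  also have "\<dots> = (\<Sum>e\<in>?Ei. \<Prod>v\<in>e - {i}. y v)"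
  proof (rule sum.cong[OF refl])
    fix e assume e: "e \<in> ?Ei"
    have "finite (e - {i})" "card (e - {i}) = k - 1"
      using e assms k_uniform_finite_edge unfolding k_uniform_def by auto
    then have "(\<Sum>is\<in>permutations_of_set (e - {i}). ?c * prod_list (map y is)) = (\<Prod>v\<in>e - {i}. y v)"
      by (simp add: prod.distinct_set_conv_list[symmetric] permutations_of_setD card_permutations_of_set
               cong: sum.cong)
    then show "(\<Sum>is\<in>index_tuples V (k - 1). if set (i # is) = e then ?c * prod_list (map y is) else 0)
             = (\<Prod>v\<in>e - {i}. y v)"
      using e index_tuples_Cons_eq_permutations[OF assms(1) _ _ assms(2), of e i]
      by (simp add: sum.inter_filter[symmetric] finite_index_tuples fin)
  qed
  finally show ?thesis .
qed

lemma of_real_prod_list: "of_real (prod_list (map y xs)) = prod_list (map (\<lambda>j. of_real (y j)) xs)"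
  by (induction xs) auto

lemma tensor_apply_A_alpha:
  assumes "k_uniform V E k" "i \<in> V" "k \<ge> 1"
  shows "tensor_apply V k (A_alpha E k \<alpha>) (\<lambda>j. complex_of_real (y j)) i
           = complex_of_real (A_alpha_mult E k \<alpha> y i)"
proof -
  have "tensor_apply V k (A_alpha E k \<alpha>) (\<lambda>j. complex_of_real (y j)) i
      = of_real (\<Sum>is\<in>index_tuples V (k - 1). A_alpha E k \<alpha> (i # is) * prod_list (map y is))"
    unfolding tensor_apply_def of_real_sum of_real_mult of_real_prod_list ..
  also have "(\<Sum>is\<in>index_tuples V (k - 1). A_alpha E k \<alpha> (i # is) * prod_list (map y is))
      = \<alpha> * (\<Sum>is\<in>index_tuples V (k - 1). deg_tensor E (i # is) * prod_list (map y is))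
          + (1 - \<alpha>) * (\<Sum>is\<in>index_tuples V (k - 1). adj_tensor E k (i # is) * prod_list (map y is))"
    unfolding A_alpha_def by (simp add: ring_distribs sum.distrib sum_distrib_left mult.assoc)
  also have "\<dots> = A_alpha_mult E k \<alpha> y i"
    using assms(1) unfolding k_uniform_def
    by (simp only: sum_deg_tensor_index_tuples[OF _ assms(2)] sum_adj_tensor_index_tuples[OF assms(1,3)]
                   A_alpha_mult_def mult.assoc)
  finally show ?thesis .
qed

lemma sum_mult_A_alpha_mult:
  assumes "k_uniform V E k" "k \<ge> 1"
  shows "(\<Sum>i\<in>V. y i * A_alpha_mult E k \<alpha> y i) = alpha_form V E k \<alpha> y"
proof -
  have fin: "finite V" "finite E" using assms(1) k_uniform_finite_edges by (auto simp: k_uniform_def)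
  have pow: "y i * y i ^ (k - 1) = y i ^ k" for i
    using assms(2) by (metis Suc_diff_le diff_Suc_1 power_Suc)
  have "y i * (\<Prod>v\<in>e - {i}. y v) = (\<Prod>v\<in>e. y v)" if "e \<in> E" "i \<in> e" for e i
    using k_uniform_finite_edge[OF assms(1) that(1)] that(2) by (simp add: prod.remove)
  then have "(\<Sum>i\<in>V. y i * (\<Sum>e\<in>{e\<in>E. i \<in> e}. \<Prod>v\<in>e - {i}. y v))
      = (\<Sum>i\<in>V. \<Sum>e\<in>E. if i \<in> e then \<Prod>v\<in>e. y v else 0)"
    by (simp add: sum_distrib_left sum.inter_filter[OF fin(2), symmetric])
  also have "\<dots> = (\<Sum>e\<in>E. \<Sum>i\<in>V. if i \<in> e then \<Prod>v\<in>e. y v else 0)"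
    by (rule sum.swap)
  also have "\<dots> = (\<Sum>e\<in>E. real k * (\<Prod>v\<in>e. y v))"
  proof (rule sum.cong[OF refl])
    fix e assume "e \<in> E"
    then have "e \<subseteq> V" "card e = k" using assms(1) by (auto simp: k_uniform_def)
    then show "(\<Sum>i\<in>V. if i \<in> e then \<Prod>v\<in>e. y v else 0) = real k * (\<Prod>v\<in>e. y v)"
      by (simp add: sum.inter_filter[OF fin(1), symmetric] Int_absorb1 Collect_mem_eq
               flip: Int_def)
  qed
  finally have edges: "(\<Sum>i\<in>V. y i * (\<Sum>e\<in>{e\<in>E. i \<in> e}. \<Prod>v\<in>e - {i}. y v))
      = real k * (\<Sum>e\<in>E. \<Prod>v\<in>e. y v)"
    by (simp add: sum_distrib_left)
  have "(\<Sum>i\<in>V. y i * A_alpha_mult E k \<alpha> y i)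
      = \<alpha> * (\<Sum>i\<in>V. real (Defs.degree E i) * (y i * y i ^ (k - 1)))
        + (1 - \<alpha>) * (\<Sum>i\<in>V. y i * (\<Sum>e\<in>{e\<in>E. i \<in> e}. \<Prod>v\<in>e - {i}. y v))"
    unfolding A_alpha_mult_def by (simp add: ring_distribs sum.distrib sum_distrib_left mult_ac)
  then show ?thesis
    unfolding pow edges alpha_form_def by (simp add: mult_ac)
qed

section \<open>The variational bound for \<open>\<rho>_\<alpha>\<close>\<close>

lemma alpha_form_cong:
  assumes "k_uniform V E k" "\<And>v. v \<in> V \<Longrightarrow> y v = z v"
  shows "alpha_form V E k \<alpha> y = alpha_form V E k \<alpha> z"
  using assms unfolding alpha_form_def k_uniform_def by (auto intro!: sum.cong prod.cong)

lemma alpha_form_scale: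
  assumes "k_uniform V E k"
  shows "alpha_form V E k \<alpha> (\<lambda>v. c * y v) = c ^ k * alpha_form V E k \<alpha> y"
proof -
  have "(\<Sum>e\<in>E. \<Prod>v\<in>e. c * y v) = c ^ k * (\<Sum>e\<in>E. \<Prod>v\<in>e. y v)"
    using assms unfolding k_uniform_def by (auto simp: sum_distrib_left prod.distrib intro!: sum.cong)
  moreover have "(\<Sum>i\<in>V. real (Defs.degree E i) * (c * y i) ^ k)
      = c ^ k * (\<Sum>i\<in>V. real (Defs.degree E i) * y i ^ k)"
    by (simp add: power_mult_distrib sum_distrib_left mult_ac)
  ultimately show ?thesis
    unfolding alpha_form_def by (simp add: algebra_simps)
qed

lemma alpha_form_le_mult_sum_power:
  assumes "k_uniform V E k" "k \<ge> 1"
    and bound: "\<forall>w\<in>nonneg_unit_sphere V k. alpha_form V E k \<alpha> w \<le> \<mu>"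
    and nonneg: "\<And>i. i \<in> V \<Longrightarrow> 0 \<le> z i"
  shows "alpha_form V E k \<alpha> z \<le> \<mu> * (\<Sum>i\<in>V. z i ^ k)"
proof (cases "\<forall>i\<in>V. z i = 0")
  case True
  have "alpha_form V E k \<alpha> z = alpha_form V E k \<alpha> (\<lambda>v. 0 * z v)"
    using True by (intro alpha_form_cong[OF assms(1)]) auto
  also have "\<dots> = 0"
    by (simp only: alpha_form_scale[OF assms(1)]) (use assms(2) in simp)
  finally show ?thesis
    using True assms(2) by (simp add: power_0_left)
next
  case False
  let ?s = "\<Sum>i\<in>V. z i ^ k"
  obtain i where i: "i \<in> V" "z i \<noteq> 0" using False by blast
  then have "z i ^ k > 0" using nonneg[of i] by (simp add: order_neq_le_trans)
  moreover have "finite V" using assms(1) by (simp add: k_uniform_def)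
  ultimately have s: "?s > 0"
    using i(1) nonneg by (intro sum_pos2[where i=i]) auto
  define c where "c = root k ?s"
  have c: "c > 0" "c ^ k = ?s"
    using s assms(2) by (simp_all add: c_def real_root_pow_pos2)
  define w where "w = (\<lambda>v. if v \<in> V then z v / c else 0)"
  have "(\<Sum>i\<in>V. w i ^ k) = (\<Sum>i\<in>V. z i ^ k) / c ^ k"
    by (simp add: w_def power_divide sum_divide_distrib)
  then have "w \<in> nonneg_unit_sphere V k"
    using nonneg c s by (auto simp: nonneg_unit_sphere_def w_def)
  moreover have "alpha_form V E k \<alpha> w = alpha_form V E k \<alpha> z / ?s"
  proof -
    have "alpha_form V E k \<alpha> w = alpha_form V E k \<alpha> (\<lambda>v. (1 / c) * z v)"
      by (rule alpha_form_cong[OF assms(1)]) (simp add: w_def)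
    also have "\<dots> = alpha_form V E k \<alpha> z / c ^ k"
      by (simp only: alpha_form_scale[OF assms(1)]) (simp add: power_divide)
    finally show ?thesis by (simp only: c)
  qed
  ultimately show ?thesis using bound s by (auto simp: divide_le_eq mult.commute)
qed

lemma alpha_form_fun_upd:
  assumes "k_uniform V E k" "k \<ge> 1" "i \<in> V"
  shows "alpha_form V E k \<alpha> (y(i := c)) = alpha_form V E k \<alpha> (y(i := 0))
           + \<alpha> * real (Defs.degree E i) * c ^ k
           + (1 - \<alpha>) * real k * c * (\<Sum>e\<in>{e\<in>E. i \<in> e}. \<Prod>v\<in>e - {i}. y v)"
proof -
  have fin: "finite V" "finite E" using assms(1) k_uniform_finite_edges by (auto simp: k_uniform_def)
  have vertices: "(\<Sum>j\<in>V. real (Defs.degree E j) * (y(i := c)) j ^ k)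
      = real (Defs.degree E i) * c ^ k + (\<Sum>j\<in>V - {i}. real (Defs.degree E j) * y j ^ k)" for c
    by (simp add: sum.remove[OF fin(1) assms(3)])
  have edges: "(\<Sum>e\<in>E. \<Prod>v\<in>e. (y(i := c)) v)
      = c * (\<Sum>e\<in>{e\<in>E. i \<in> e}. \<Prod>v\<in>e - {i}. y v) + (\<Sum>e\<in>{e\<in>E. i \<notin> e}. \<Prod>v\<in>e. y v)" for c
  proof -
    have "(\<Prod>v\<in>e. (y(i := c)) v) = (if i \<in> e then c * (\<Prod>v\<in>e - {i}. y v) else \<Prod>v\<in>e. y v)"
      if "e \<in> E" for e
    proof (cases "i \<in> e")
      case True
      then show ?thesis using k_uniform_finite_edge[OF assms(1) that] by (simp add: prod.remove)
    next
      case False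
      then show ?thesis by (auto intro: prod.cong)
    qed
    then have "(\<Sum>e\<in>E. \<Prod>v\<in>e. (y(i := c)) v)
        = (\<Sum>e\<in>E. if i \<in> e then c * (\<Prod>v\<in>e - {i}. y v) else \<Prod>v\<in>e. y v)"
      by (rule sum.cong[OF refl])
    also have "\<dots> = (\<Sum>e\<in>E \<inter> {e. i \<in> e}. c * (\<Prod>v\<in>e - {i}. y v)) + (\<Sum>e\<in>E \<inter> - {e. i \<in> e}. \<Prod>v\<in>e. y v)"
      by (rule sum.If_cases[OF fin(2)])
    also have "\<dots> = c * (\<Sum>e\<in>{e\<in>E. i \<in> e}. \<Prod>v\<in>e - {i}. y v) + (\<Sum>e\<in>{e\<in>E. i \<notin> e}. \<Prod>v\<in>e. y v)"
      by (simp add: sum_distrib_left Int_def Compl_eq conj_commute)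
    finally show ?thesis .
  qed
  have "(0::real) ^ k = 0" using assms(2) by simp
  then show ?thesis
    unfolding alpha_form_def vertices edges by (simp add: ring_distribs)
qed

lemma sum_power_fun_upd:
  fixes y :: "'a \<Rightarrow> real"
  assumes "finite V" "i \<in> V" "k \<ge> 1"
  shows "(\<Sum>j\<in>V. (y(i := c)) j ^ k) = (\<Sum>j\<in>V. (y(i := 0)) j ^ k) + c ^ k"
proof -
  have "(\<Sum>j\<in>V. (y(i := c)) j ^ k) = c ^ k + (\<Sum>j\<in>V - {i}. y j ^ k)" for c
    by (simp add: sum.remove[OF assms(1,2)])
  then show ?thesis using assms(3) by simp
qed

lemma A_alpha_mult_nonneg:
  assumes "k_uniform V E k" "0 \<le> \<alpha>" "\<alpha> \<le> 1" "\<And>v. v \<in> V \<Longrightarrow> 0 \<le> y v" "i \<in> V"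
  shows "0 \<le> A_alpha_mult E k \<alpha> y i"
proof -
  have "0 \<le> (\<Sum>e\<in>{e\<in>E. i \<in> e}. \<Prod>v\<in>e - {i}. y v)"
    using assms unfolding k_uniform_def by (intro sum_nonneg prod_nonneg) auto
  then show ?thesis
    unfolding A_alpha_mult_def using assms by (intro add_nonneg_nonneg mult_nonneg_nonneg) auto
qed

text \<open>Vary the coordinate \<open>y i\<close> alone. At a boundary point \<open>y i = 0\<close> only one-sided
  variations are allowed, and there the nonnegativity of \<open>A_alpha_mult\<close> closes the gap.\<close>
lemma alpha_form_maximizer_eigen:
  assumes "k_uniform V E k" "k \<ge> 2" "0 \<le> \<alpha>" "\<alpha> \<le> 1"
    and nonneg: "\<And>v. v \<in> V \<Longrightarrow> 0 \<le> y v" and unit: "(\<Sum>j\<in>V. y j ^ k) = 1"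
    and max: "\<forall>w\<in>nonneg_unit_sphere V k. alpha_form V E k \<alpha> w \<le> alpha_form V E k \<alpha> y"
    and i: "i \<in> V"
  shows "A_alpha_mult E k \<alpha> y i = alpha_form V E k \<alpha> y * y i ^ (k - 1)"
proof -
  define \<mu> where "\<mu> = alpha_form V E k \<alpha> y"
  define S where "S = (\<Sum>e\<in>{e\<in>E. i \<in> e}. \<Prod>v\<in>e - {i}. y v)"
  define \<phi> where "\<phi> c = alpha_form V E k \<alpha> (y(i := c)) - \<mu> * (\<Sum>j\<in>V. (y(i := c)) j ^ k)" for c
  define l where "l = real k * (A_alpha_mult E k \<alpha> y i - \<mu> * y i ^ (k - 1))"
  have k: "k \<ge> 1" "real k > 0" using assms(2) by auto
  have fV: "finite V" using assms(1) by (simp add: k_uniform_def)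
  obtain C where \<phi>_poly:
    "\<phi> = (\<lambda>c. C + \<alpha> * real (Defs.degree E i) * c ^ k + (1 - \<alpha>) * real k * c * S - \<mu> * c ^ k)"
  proof
    have "\<phi> c = \<phi> 0 + \<alpha> * real (Defs.degree E i) * c ^ k + (1 - \<alpha>) * real k * c * S - \<mu> * c ^ k"
      for c
      unfolding \<phi>_def S_def alpha_form_fun_upd[OF assms(1) k(1) i, of \<alpha> y c]
        sum_power_fun_upd[OF fV i k(1), of y c]
      by (simp add: algebra_simps)
    then show "\<phi> = (\<lambda>c. \<phi> 0 + \<alpha> * real (Defs.degree E i) * c ^ k + (1 - \<alpha>) * real k * c * S - \<mu> * c ^ k)"
      by (rule ext)
  qed
  have D: "(\<phi> has_real_derivative l) (at (y i))"
    unfolding \<phi>_poly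
    by (auto intro!: derivative_eq_intros simp: l_def A_alpha_mult_def S_def algebra_simps)
  have at_y: "\<phi> (y i) = 0"
    by (simp add: \<phi>_def \<mu>_def unit)
  have nonpos: "\<phi> c \<le> 0" if "0 \<le> c" for c
    using alpha_form_le_mult_sum_power[OF assms(1) k(1), of \<alpha> \<mu> "y(i := c)"] max nonneg that
    by (simp add: \<phi>_def \<mu>_def)
  have "l = 0"
  proof (cases "y i > 0")
    case True
    then show ?thesis using D at_y nonpos by (intro DERIV_local_max[where d = "y i"]) auto
  next
    case False
    then have yi: "y i = 0" using nonneg[OF i] by simp
    have "\<not> l > 0"
    proof
      assume "l > 0"
      then obtain d where "d > 0" "\<And>h. 0 < h \<Longrightarrow> h < d \<Longrightarrow> \<phi> (y i) < \<phi> (y i + h)"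
        using DERIV_pos_inc_right[OF D] by blast
      then have "0 < \<phi> (d / 2)" using at_y yi by force
      then show False using nonpos[of "d / 2"] \<open>d > 0\<close> by simp
    qed
    moreover have "l = real k * A_alpha_mult E k \<alpha> y i"
      using yi assms(2) by (simp add: l_def)
    moreover have "0 \<le> A_alpha_mult E k \<alpha> y i"
      using A_alpha_mult_nonneg[OF assms(1,3,4) nonneg i] .
    ultimately show ?thesis using k by (simp add: zero_less_mult_iff)
  qed
  then show ?thesis unfolding l_def \<mu>_def using k by simp
qed

lemma continuous_on_alpha_form: "continuous_on UNIV (alpha_form V E k \<alpha>)"
  unfolding alpha_form_def by (intro continuous_intros continuous_on_product_coordinates)

lemma compact_nonneg_unit_sphere:
  assumes "finite V" "k \<ge> 1"
  shows "compact (nonneg_unit_sphere V k)"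
proof -
  define B where "B i = (if i \<in> V then {0..1::real} else {0})" for i
  have "compactin (product_topology (\<lambda>_. euclidean) UNIV) (PiE UNIV B)"
    by (subst compactin_PiE) (auto simp: B_def)
  then have box: "compact (Pi UNIV B)"
    by (simp add: euclidean_product_topology PiE_UNIV_domain)
  have sphere: "closed {y. (\<Sum>i\<in>V. y i ^ k) = (1::real)}"
    by (intro closed_Collect_eq continuous_intros continuous_on_product_coordinates)
  have "y i \<le> 1" if "y \<in> nonneg_unit_sphere V k" "i \<in> V" for y i
  proof -
    have "y i ^ k \<le> (\<Sum>i\<in>V. y i ^ k)"
      using that assms by (intro member_le_sum) (auto simp: nonneg_unit_sphere_def)
    then show ?thesis
      using that assms by (auto simp: nonneg_unit_sphere_def power_le_one_iff)
  qed
  then have "nonneg_unit_sphere V k = Pi UNIV B \<inter> {y. (\<Sum>i\<in>V. y i ^ k) = 1}"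
    by (auto simp: nonneg_unit_sphere_def B_def Pi_iff split: if_splits)
  then show ?thesis using compact_Int_closed[OF box sphere] by simp
qed

lemma norm_prod_list_le_power:
  assumes "\<And>j. j \<in> set xs \<Longrightarrow> cmod (z j) \<le> M"
  shows "cmod (prod_list (map z xs)) \<le> M ^ length xs"
  using assms
proof (induction xs)
  case (Cons a xs)
  then show ?case
    by (auto simp: norm_mult intro: mult_mono order_trans[OF norm_ge_zero])
qed simp

lemma tensor_eigenvalue_norm_le:
  assumes "finite V" "tensor_eigenvalue V k T lam"
  shows "cmod lam \<le> (\<Sum>i\<in>V. \<Sum>is\<in>index_tuples V (k - 1). \<bar>T (i # is)\<bar>)"
proof -
  obtain z where nz: "\<exists>i\<in>V. z i \<noteq> 0" and eq: "\<forall>i\<in>V. tensor_apply V k T z i = lam * z i ^ (k - 1)"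
    using assms(2) unfolding tensor_eigenvalue_def by blast
  define M where "M = Max ((\<lambda>j. cmod (z j)) ` V)"
  have "M \<in> (\<lambda>j. cmod (z j)) ` V" unfolding M_def using assms(1) nz by (intro Max_in) auto
  then obtain i where i: "i \<in> V" and M: "M = cmod (z i)" by blast
  have le_M: "cmod (z j) \<le> M" if "j \<in> V" for j using that assms(1) unfolding M_def by auto
  have "M > 0" using nz le_M by (metis less_le_trans norm_not_less_zero zero_less_norm_iff not_le)
  have "cmod lam * M ^ (k - 1) = cmod (tensor_apply V k T z i)"
    using eq i M by (simp add: norm_mult norm_power)
  also have "\<dots> \<le> (\<Sum>is\<in>index_tuples V (k - 1). \<bar>T (i # is)\<bar> * M ^ (k - 1))"
    unfolding tensor_apply_def
  proof (rule order_trans[OF norm_sum sum_mono])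
    fix xs assume "xs \<in> index_tuples V (k - 1)"
    then have "cmod (prod_list (map z xs)) \<le> M ^ (k - 1)"
      using norm_prod_list_le_power[of xs z M] le_M by (auto simp: index_tuples_def)
    then show "cmod (complex_of_real (T (i # xs)) * prod_list (map z xs)) \<le> \<bar>T (i # xs)\<bar> * M ^ (k - 1)"
      by (simp add: norm_mult mult_left_mono)
  qed
  finally have "cmod lam \<le> (\<Sum>is\<in>index_tuples V (k - 1). \<bar>T (i # is)\<bar>)"
    using \<open>M > 0\<close> by (simp add: sum_distrib_right[symmetric] mult_le_cancel_right)
  also have "\<dots> \<le> (\<Sum>i\<in>V. \<Sum>is\<in>index_tuples V (k - 1). \<bar>T (i # is)\<bar>)"
    using i assms(1) by (intro member_le_sum) (auto intro: sum_nonneg)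
  finally show ?thesis .
qed

lemma norm_le_tensor_spectral_radius:
  assumes "finite V" "tensor_eigenvalue V k T lam"
  shows "cmod lam \<le> tensor_spectral_radius V k T"
  unfolding tensor_spectral_radius_def
  using assms tensor_eigenvalue_norm_le[OF assms(1)] by (intro cSup_upper bdd_aboveI) auto

lemma alpha_form_le_rho_alpha:
  assumes "k_uniform V E k" "k \<ge> 2" "0 \<le> \<alpha>" "\<alpha> \<le> 1" "w \<in> nonneg_unit_sphere V k"
  shows "alpha_form V E k \<alpha> w \<le> rho_alpha V E k \<alpha>"
proof -
  have fV: "finite V" using assms(1) by (simp add: k_uniform_def)
  have "\<exists>y\<in>nonneg_unit_sphere V k. \<forall>z\<in>nonneg_unit_sphere V k. alpha_form V E k \<alpha> z \<le> alpha_form V E k \<alpha> y"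
  proof (rule continuous_attains_sup)
    show "compact (nonneg_unit_sphere V k)" using compact_nonneg_unit_sphere[OF fV] assms(2) by simp
    show "nonneg_unit_sphere V k \<noteq> {}" using assms(5) by blast
    show "continuous_on (nonneg_unit_sphere V k) (alpha_form V E k \<alpha>)"
      by (rule continuous_on_subset[OF continuous_on_alpha_form subset_UNIV])
  qed
  then obtain y where y: "y \<in> nonneg_unit_sphere V k"
    and max: "\<forall>z\<in>nonneg_unit_sphere V k. alpha_form V E k \<alpha> z \<le> alpha_form V E k \<alpha> y"
    by blast
  have "tensor_eigenvalue V k (A_alpha E k \<alpha>) (of_real (alpha_form V E k \<alpha> y))"
    unfolding tensor_eigenvalue_def
  proof (intro exI conjI ballI)
    show "\<exists>i\<in>V. complex_of_real (y i) \<noteq> 0"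
    proof (rule ccontr)
      assume "\<not> (\<exists>i\<in>V. complex_of_real (y i) \<noteq> 0)"
      then have "(\<Sum>i\<in>V. y i ^ k) = 0" using assms(2) by simp
      then show False using y by (simp add: nonneg_unit_sphere_def)
    qed
  next
    fix i assume "i \<in> V"
    then show "tensor_apply V k (A_alpha E k \<alpha>) (\<lambda>j. complex_of_real (y j)) i
              = of_real (alpha_form V E k \<alpha> y) * complex_of_real (y i) ^ (k - 1)"
      using alpha_form_maximizer_eigen[OF assms(1-4) _ _ max] y assms(2)
      by (simp add: tensor_apply_A_alpha[OF assms(1)] nonneg_unit_sphere_def)
  qed
  then have "alpha_form V E k \<alpha> y \<le> rho_alpha V E k \<alpha>"
    using norm_le_tensor_spectral_radius[OF fV] unfolding rho_alpha_def by force
  then show ?thesis using max assms(5) by force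
qed

lemma alpha_perron_vector_eigen:
  assumes "k_uniform V E k" "k \<ge> 1" "alpha_perron_vector V E k \<alpha> x" "i \<in> V"
  shows "A_alpha_mult E k \<alpha> x i = rho_alpha V E k \<alpha> * x i ^ (k - 1)"
proof -
  have "complex_of_real (A_alpha_mult E k \<alpha> x i) = tensor_apply V k (A_alpha E k \<alpha>) (\<lambda>j. of_real (x j)) i"
    by (rule tensor_apply_A_alpha[OF assms(1,4,2), symmetric])
  also have "\<dots> = of_real (rho_alpha V E k \<alpha> * x i ^ (k - 1))"
    using assms(3,4) unfolding alpha_perron_vector_def by simp
  finally show ?thesis by (simp only: of_real_eq_iff)
qed

lemma alpha_perron_vector_alpha_form:
  assumes "k_uniform V E k" "k \<ge> 1" "alpha_perron_vector V E k \<alpha> x"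
  shows "alpha_form V E k \<alpha> x = rho_alpha V E k \<alpha>"
proof -
  have "alpha_form V E k \<alpha> x = (\<Sum>i\<in>V. x i * A_alpha_mult E k \<alpha> x i)"
    by (simp add: sum_mult_A_alpha_mult[OF assms(1,2)])
  also have "\<dots> = (\<Sum>i\<in>V. rho_alpha V E k \<alpha> * x i ^ k)"
    using alpha_perron_vector_eigen[OF assms] assms(2)
    by (intro sum.cong refl) (simp add: power_eq_if mult_ac)
  also have "\<dots> = rho_alpha V E k \<alpha>"
    using assms(3) by (simp add: alpha_perron_vector_def flip: sum_distrib_left)
  finally show ?thesis .
qed

section \<open>Edge switching\<close>

lemma real_degree_eq_sum:
  assumes "finite E"
  shows "real (Defs.degree E i) = (\<Sum>s\<in>E. if i \<in> s then 1 else 0)"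
  unfolding Defs.degree_def using assms by (simp add: sum.inter_filter[symmetric])

lemma A_alpha_mult_eq_sum:
  assumes "finite E"
  shows "A_alpha_mult E k \<alpha> y i = \<alpha> * real (Defs.degree E i) * y i ^ (k - 1)
           + (1 - \<alpha>) * (\<Sum>s\<in>E. if i \<in> s then \<Prod>v\<in>s - {i}. y v else 0)"
  unfolding A_alpha_mult_def using assms by (simp add: sum.inter_filter)

locale edge_switching =
  fixes V :: "'a set" and E :: "'a set set" and k :: nat and e f U W :: "'a set"
  assumes uniform: "k_uniform V E k"
    and edges: "e \<in> E" "f \<in> E" and disjoint: "e \<inter> f = {}"
    and U: "U \<subset> e" and W: "W \<subset> f" and U_nonempty: "U \<noteq> {}" and card_eq: "card U = card W"
    and new_edges: "U \<union> (f - W) \<notin> E" "W \<union> (e - U) \<notin> E"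
begin

abbreviation "e' \<equiv> U \<union> (f - W)"
abbreviation "f' \<equiv> W \<union> (e - U)"
abbreviation "E' \<equiv> (E - {e, f}) \<union> {e', f'}"

lemma finite_parts: "finite e" "finite f" "finite U" "finite W"
  using uniform edges U W k_uniform_finite_edge finite_subset psubset_imp_subset by metis+

lemma k_uniform_switched: "k_uniform V E' k"
proof -
  have card: "card e = k" "card f = k" and sub: "e \<subseteq> V" "f \<subseteq> V"
    using uniform edges by (auto simp: k_uniform_def)
  have "card e' = card U + card (f - W)" "card f' = card W + card (e - U)"
    using finite_parts disjoint U W by (auto intro!: card_Un_disjoint)
  moreover have "card (f - W) = k - card W" "card (e - U) = k - card U"
    using card finite_parts U W by (auto simp: card_Diff_subset)
  moreover have "card U \<le> k" "card W \<le> k"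
    using card card_mono[OF finite_parts(1), of U] card_mono[OF finite_parts(2), of W] U W by auto
  ultimately have "card e' = k" "card f' = k" using card_eq by auto
  then show ?thesis
    using uniform sub U W unfolding k_uniform_def by auto
qed

lemma sum_switched:
  fixes g :: "'a set \<Rightarrow> 'b :: ab_group_add"
  shows "(\<Sum>s\<in>E'. g s) = (\<Sum>s\<in>E. g s) - g e - g f + g e' + g f'"
proof -
  have fE: "finite E" using k_uniform_finite_edges[OF uniform] .
  obtain u where u: "u \<in> U" using U_nonempty by blast
  have "e \<noteq> f" "e' \<noteq> f'" using u U W disjoint by auto
  have "(\<Sum>s\<in>E. g s) = g e + (\<Sum>s\<in>E - {e}. g s)"
    by (rule sum.remove[OF fE edges(1)])
  also have "(\<Sum>s\<in>E - {e}. g s) = g f + (\<Sum>s\<in>E - {e} - {f}. g s)"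
    using fE edges \<open>e \<noteq> f\<close> by (intro sum.remove) auto
  also have "E - {e} - {f} = E - {e, f}" by auto
  finally have "(\<Sum>s\<in>E. g s) = g e + g f + (\<Sum>s\<in>E - {e, f}. g s)"
    by (simp add: add.assoc)
  moreover have "(\<Sum>s\<in>E'. g s) = g e' + g f' + (\<Sum>s\<in>E - {e, f}. g s)"
    using fE new_edges \<open>e' \<noteq> f'\<close> by (simp add: insert_commute[of e'] add.assoc)
  ultimately show ?thesis by (simp add: algebra_simps)
qed

lemma degree_switched: "Defs.degree E' i = Defs.degree E i"
proof -
  have "real (Defs.degree E' i) = real (Defs.degree E i)"
    unfolding real_degree_eq_sum[OF k_uniform_finite_edges[OF uniform]]
      real_degree_eq_sum[OF k_uniform_finite_edges[OF k_uniform_switched]] sum_switched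
    using U W disjoint by auto
  then show ?thesis by simp
qed

lemma prod_edges_split:
  "(\<Prod>v\<in>e. y v) = (\<Prod>v\<in>U. y v) * (\<Prod>v\<in>e - U. y v)"
  "(\<Prod>v\<in>f. y v) = (\<Prod>v\<in>W. y v) * (\<Prod>v\<in>f - W. y v)"
  "(\<Prod>v\<in>e'. y v) = (\<Prod>v\<in>U. y v) * (\<Prod>v\<in>f - W. y v)"
  "(\<Prod>v\<in>f'. y v) = (\<Prod>v\<in>W. y v) * (\<Prod>v\<in>e - U. y v)"
proof -
  have "U \<subseteq> e" "W \<subseteq> f" using U W by auto
  then show "(\<Prod>v\<in>e. y v) = (\<Prod>v\<in>U. y v) * (\<Prod>v\<in>e - U. y v)"
    "(\<Prod>v\<in>f. y v) = (\<Prod>v\<in>W. y v) * (\<Prod>v\<in>f - W. y v)"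
    using finite_parts by (simp_all add: prod.subset_diff mult.commute)
  show "(\<Prod>v\<in>e'. y v) = (\<Prod>v\<in>U. y v) * (\<Prod>v\<in>f - W. y v)"
    "(\<Prod>v\<in>f'. y v) = (\<Prod>v\<in>W. y v) * (\<Prod>v\<in>e - U. y v)"
    using finite_parts \<open>U \<subseteq> e\<close> \<open>W \<subseteq> f\<close> disjoint by (auto intro!: prod.union_disjoint)
qed

lemma alpha_form_switched:
  "alpha_form V E' k \<alpha> y - alpha_form V E k \<alpha> y
     = (1 - \<alpha>) * real k * (((\<Prod>v\<in>U. y v) - (\<Prod>v\<in>W. y v)) * ((\<Prod>v\<in>f - W. y v) - (\<Prod>v\<in>e - U. y v)))"
  unfolding alpha_form_def degree_switched sum_switched prod_edges_split
  by (simp add: algebra_simps)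

lemma A_alpha_mult_switched_at_U:
  assumes u: "u \<in> U"
  shows "A_alpha_mult E' k \<alpha> y u - A_alpha_mult E k \<alpha> y u
           = (1 - \<alpha>) * (\<Prod>v\<in>U - {u}. y v) * ((\<Prod>v\<in>f - W. y v) - (\<Prod>v\<in>e - U. y v))"
proof -
  have "e' - {u} = (U - {u}) \<union> (f - W)" "e - {u} = (U - {u}) \<union> (e - U)"
    using u U W disjoint by auto
  then have "(\<Prod>v\<in>e' - {u}. y v) = (\<Prod>v\<in>U - {u}. y v) * (\<Prod>v\<in>f - W. y v)"
    "(\<Prod>v\<in>e - {u}. y v) = (\<Prod>v\<in>U - {u}. y v) * (\<Prod>v\<in>e - U. y v)"
    using finite_parts U W disjoint by (auto intro!: prod.union_disjoint)
  moreover have "u \<in> e" "u \<notin> f" "u \<in> e'" "u \<notin> f'" using u U W disjoint by auto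
  ultimately show ?thesis
    unfolding A_alpha_mult_eq_sum[OF k_uniform_finite_edges[OF uniform]]
      A_alpha_mult_eq_sum[OF k_uniform_finite_edges[OF k_uniform_switched]] sum_switched degree_switched
    by (simp add: algebra_simps)
qed

lemma A_alpha_mult_switched_at_f_minus_W:
  assumes v: "v \<in> f - W"
  shows "A_alpha_mult E' k \<alpha> y v - A_alpha_mult E k \<alpha> y v
           = (1 - \<alpha>) * (\<Prod>w\<in>f - W - {v}. y w) * ((\<Prod>w\<in>U. y w) - (\<Prod>w\<in>W. y w))"
proof -
  have "e' - {v} = U \<union> (f - W - {v})" "f - {v} = W \<union> (f - W - {v})"
    using v U W disjoint by auto
  then have "(\<Prod>w\<in>e' - {v}. y w) = (\<Prod>w\<in>U. y w) * (\<Prod>w\<in>f - W - {v}. y w)"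
    "(\<Prod>w\<in>f - {v}. y w) = (\<Prod>w\<in>W. y w) * (\<Prod>w\<in>f - W - {v}. y w)"
    using finite_parts U W disjoint by (auto intro!: prod.union_disjoint)
  moreover have "v \<notin> e" "v \<in> f" "v \<in> e'" "v \<notin> f'" using v U W disjoint by auto
  ultimately show ?thesis
    unfolding A_alpha_mult_eq_sum[OF k_uniform_finite_edges[OF uniform]]
      A_alpha_mult_eq_sum[OF k_uniform_finite_edges[OF k_uniform_switched]] sum_switched degree_switched
    by (simp add: algebra_simps)
qed

lemma switched_A_alpha_mult_eq_imp:
  assumes "\<alpha> \<noteq> 1" and pos: "\<And>i. i \<in> V \<Longrightarrow> 0 < y i"
    and eq: "\<And>i. i \<in> V \<Longrightarrow> A_alpha_mult E' k \<alpha> y i = A_alpha_mult E k \<alpha> y i"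
  shows "(\<Prod>v\<in>U. y v) = (\<Prod>v\<in>W. y v)" "(\<Prod>v\<in>e - U. y v) = (\<Prod>v\<in>f - W. y v)"
proof -
  obtain u v where u: "u \<in> U" and v: "v \<in> f - W" using U_nonempty W by blast
  have "e \<subseteq> V" "f \<subseteq> V" using uniform edges by (auto simp: k_uniform_def)
  then have "u \<in> V" "v \<in> V" using u v U by auto
  have prod_pos: "0 < (\<Prod>w\<in>A. y w)" if "A \<subseteq> V" for A
    using that pos by (intro prod_pos) blast
  have "f - W - {v} \<subseteq> V" "U - {u} \<subseteq> V" using \<open>e \<subseteq> V\<close> \<open>f \<subseteq> V\<close> U by auto
  have "(1 - \<alpha>) * (\<Prod>w\<in>f - W - {v}. y w) * ((\<Prod>w\<in>U. y w) - (\<Prod>w\<in>W. y w)) = 0"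
    using A_alpha_mult_switched_at_f_minus_W[OF v, where \<alpha> = \<alpha> and y = y] eq[OF \<open>v \<in> V\<close>] by simp
  then show "(\<Prod>v\<in>U. y v) = (\<Prod>v\<in>W. y v)"
    using assms(1) prod_pos[OF \<open>f - W - {v} \<subseteq> V\<close>] by simp
  have "(1 - \<alpha>) * (\<Prod>v\<in>U - {u}. y v) * ((\<Prod>v\<in>f - W. y v) - (\<Prod>v\<in>e - U. y v)) = 0"
    using A_alpha_mult_switched_at_U[OF u, where \<alpha> = \<alpha> and y = y] eq[OF \<open>u \<in> V\<close>] by simp
  then show "(\<Prod>v\<in>e - U. y v) = (\<Prod>v\<in>f - W. y v)"
    using assms(1) prod_pos[OF \<open>U - {u} \<subseteq> V\<close>] by simp
qed

end

theorem theorem4p2: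
  fixes VV :: "'a set" and E :: "'a set set" and k :: nat and \<alpha> :: real
    and x :: "'a \<Rightarrow> real" and e f U W :: "'a set"
  assumes "k \<ge> 2" and "0 \<le> \<alpha>" and "\<alpha> < 1"
    and "k_uniform VV E k" and "hg_connected VV E"
    and "alpha_perron_vector VV E k \<alpha> x"
    and "e \<in> E" and "f \<in> E" and "e \<inter> f = {}"
    and "U \<subset> e" and "W \<subset> f"
    and "1 \<le> card U" and "card U = card W" and "card W \<le> k - 1"
    and "U \<union> (f - W) \<notin> E" and "W \<union> (e - U) \<notin> E"
    and "(\<Prod>w\<in>U. x w) \<ge> (\<Prod>w\<in>W. x w)"
    and "(\<Prod>w\<in>e - U. x w) \<le> (\<Prod>w\<in>f - W. x w)"
    and "(\<Prod>w\<in>U. x w) > (\<Prod>w\<in>W. x w) \<or> (\<Prod>w\<in>e - U. x w) < (\<Prod>w\<in>f - W. x w)"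
  shows "rho_alpha VV E k \<alpha>
           < rho_alpha VV ((E - {e, f}) \<union> {U \<union> (f - W), W \<union> (e - U)}) k \<alpha>"
proof (rule ccontr)
  interpret edge_switching VV E k e f U W
    using assms(4,7-13,15,16) by unfold_locales auto
  let ?\<rho> = "rho_alpha VV E k \<alpha>" and ?S = "nonneg_unit_sphere VV k"
  have k1: "k \<ge> 1" using assms(1) by simp
  have x_pos: "\<And>i. i \<in> VV \<Longrightarrow> 0 < x i" and x_unit: "(\<Sum>i\<in>VV. x i ^ k) = 1"
    using assms(6) by (auto simp: alpha_perron_vector_def)
  then have x_nonneg: "\<And>i. i \<in> VV \<Longrightarrow> 0 \<le> x i" by (simp add: less_imp_le)
  assume "\<not> ?\<rho> < rho_alpha VV E' k \<alpha>"
  then have bound: "\<forall>w\<in>?S. alpha_form VV E' k \<alpha> w \<le> ?\<rho>"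
    using alpha_form_le_rho_alpha[OF k_uniform_switched assms(1,2)] assms(3) by force
  have "alpha_form VV E k \<alpha> x = ?\<rho>"
    by (rule alpha_perron_vector_alpha_form[OF assms(4) k1 assms(6)])
  moreover have "0 \<le> alpha_form VV E' k \<alpha> x - alpha_form VV E k \<alpha> x"
    unfolding alpha_form_switched using assms(3,17,18) by simp
  moreover have "alpha_form VV E' k \<alpha> x \<le> ?\<rho>"
    using alpha_form_le_mult_sum_power[OF k_uniform_switched k1 bound, of x] x_nonneg x_unit by simp
  ultimately have "alpha_form VV E' k \<alpha> x = ?\<rho>" by linarith
  then have "A_alpha_mult E' k \<alpha> x i = A_alpha_mult E k \<alpha> x i" if "i \<in> VV" for i
    using alpha_form_maximizer_eigen[OF k_uniform_switched assms(1,2) _ _ x_unit _ that]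
      alpha_perron_vector_eigen[OF assms(4) k1 assms(6) that] bound x_nonneg assms(3)
    by simp
  then show False
    using switched_A_alpha_mult_eq_imp[of \<alpha> x] x_pos assms(3,19) by auto
qed

end
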